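(* Let $j\ge 1$, $\lambda\ge 1$, $s\ge 0$ be integers and let $w=w_{j,s,\lambda}$ be the leaf weight sequence defined in the context. Then for every integer $n>3+2s+\lambda j$ we have $1\le n-s-w(n-j)<n$ and \[ w(n)=w\bigl(n-s-w(n-j)\bigr)+\lambda j . \]
   Context: Fix integers $j\ge1$, $\lambda\ge1$, $s\ge0$. Define a labeled infinite rooted tree $\mathcal K$ as follows. It has "supernodes" $S_0,S_1,S_2,\dots$ with an edge between $S_i$ and $S_{i+1}$ for every $i\ge0$ ($S_0$ is the root). $S_0$ has two further children: the "initial leaf" and a node $N_0$, which is a leaf. For each $i\ge1$, $S_i$ has a child $N_i$ (the "knot node"), and attached to $N_i$ are $\lambda$ chains, each a path of $i\cdot j$ nodes hanging from $N_i$; the last (bottom) node of each chain is a leaf. Each supernode carries $s$ labels and every other node carries exactly one label. The labels are the consecutive positive integers $1,2,3,\dots$, assigned in the following order: initial leaf, $S_0$, $N_0$; then for $i=1,2,3,\dots$: $S_i$ (its $s$ labels), $N_i$, then the nodes of the first chain of $N_i$ from top to bottom, then the second chain, ..., then the $\lambda$-th chain. The initial leaf has weight $1$; every other leaf of $\mathcal K$ (namely $N_0$ and the bottom node of each chain) has weight $j$. The leaf weight sequence $w(n)=w_{j,s,\lambda}(n)$ ($n\ge1$) is the total weight of the leaves of $\mathcal K$ whose label is $\le n$. Explicitly, $w(n)=1+j\cdot\#\{\ell\in L:\ell\le n\}$, where $L$ consists of the number $s+2$ together with the numbers $L_{i,c}=s+2+\sum_{l=1}^{i-1}(s+1+\lambda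 l j)+s+1+c\,i\,j$ for $i\ge1$, $1\le c\le\lambda$. *)

theory Defs
  imports Main
begin

definition Lic :: "nat \<Rightarrow> nat \<Rightarrow> nat \<Rightarrow> nat \<Rightarrow> nat \<Rightarrow> nat" where
  "Lic j s lam i c = s + 2 + (\<Sum>l = 1..i - 1. s + 1 + lam * l * j) + s + 1 + c * i * j"

definition leafLabels :: "nat \<Rightarrow> nat \<Rightarrow> nat \<Rightarrow> nat set" where
  "leafLabels j s lam = {s + 2} \<union> {Lic j s lam i c | i c. 1 \<le> i \<and> 1 \<le> c \<and> c \<le> lam}"

definition leafWeight :: "nat \<Rightarrow> nat \<Rightarrow> nat \<Rightarrow> nat \<Rightarrow> nat" where
  "leafWeight j s lam n = 1 + j * card {l \<in> leafLabels j s lam. l \<le> n}"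

end

theory Submission
  imports Defs
begin

(* The leaf labels of the tree form a strictly increasing sequence
   leaf 0 < leaf 1 < leaf 2 < ..., where leaf 0 = s + 2 and, for k = lam*i + c with
   1 <= c <= lam, leaf k is the bottom of the c-th chain below the knot node N_(i+1).
   Two facts about this sequence carry the whole argument:
     (1) leaf k = leaf (k - lam) + s + 1 + j * k  for k > 0  (truncated subtraction),
     (2) consecutive labels are at least j apart: leaf k + j <= leaf (Suc k).
   Writing cnt N for the number of leaf labels <= N, we have w(N) = 1 + j * cnt N.
   For n >= leaf lam put K = cnt n and K' = cnt (n - j); by (2), K' is K or K - 1,
   and in both cases (1) yields
     leaf (K - 1 - lam) <= n - (s + 1 + j * K') < leaf (K - lam),
   i.e. m = n - s - w(n - j) satisfies cnt m = K - lam, which is w(n) = w(m) + lam*j. *)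

text \<open>Counting the values of a strictly increasing sequence below a bound: the indices
  of the values \<open>\<le> N\<close> form an initial segment, whose length is their number.\<close>
lemma le_iff_less_card_strict_mono:
  fixes f :: "nat \<Rightarrow> nat"
  assumes "strict_mono f"
  shows "f k \<le> N \<longleftrightarrow> k < card {i. f i \<le> N}"
proof -
  define K where "K = (LEAST i. N < f i)"
  have exceeds: "N < f (Suc N)"
    using strict_mono_imp_increasing[OF assms, of "Suc N"] by simp
  have "{i. f i \<le> N} = {..<K}"
  proof (intro set_eqI iffI)
    fix i assume "i \<in> {i. f i \<le> N}"
    then have "\<not> f K \<le> f i"
      using LeastI[of "\<lambda>i. N < f i", OF exceeds] by (simp add: K_def)
    then show "i \<in> {..<K}"
      using assms by (simp add: strict_mono_less_eq)
  next
    fix i assume "i \<in> {..<K}"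
    then show "i \<in> {i. f i \<le> N}"
      using not_less_Least[of i "\<lambda>i. N < f i"] by (simp add: K_def)
  qed
  then show ?thesis
    by (metis card_lessThan lessThan_iff mem_Collect_eq)
qed

lemma Lic_one: "Lic j s lam (Suc 0) c = 2 * s + 3 + c * j"
  by (simp add: Lic_def)

text \<open>Passing from the chains below \<open>N\<^sub>i\<^sub>+\<^sub>1\<close> to the corresponding chains below
  \<open>N\<^sub>i\<^sub>+\<^sub>2\<close> adds one supernode, one knot node, \<open>lam\<close> complete chains and \<open>c\<close> more nodes.\<close>
lemma Lic_Suc:
  "Lic j s lam (Suc (Suc i)) c = Lic j s lam (Suc i) c + s + 1 + j * (lam * Suc i + c)"
  by (simp add: Lic_def algebra_simps)

context
  fixes j s lam :: nat
  assumes j_pos: "j \<ge> 1" and lam_pos: "lam \<ge> 1"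
begin

text \<open>The \<open>k\<close>-th leaf label (counting from 0, the initial leaf excluded): \<open>N\<^sub>0\<close> first,
  then the \<open>lam\<close> chain bottoms below \<open>N\<^sub>1\<close>, then those below \<open>N\<^sub>2\<close>, and so on.\<close>
definition leaf :: "nat \<Rightarrow> nat" where
  "leaf k = (if k = 0 then s + 2
             else Lic j s lam ((k - 1) div lam + 1) ((k - 1) mod lam + 1))"

definition cnt :: "nat \<Rightarrow> nat" where
  "cnt N = card {k. leaf k \<le> N}"

lemma leaf_chain:
  assumes "1 \<le> c" "c \<le> lam"
  shows "leaf (lam * i + c) = Lic j s lam (Suc i) c"
proof -
  obtain d where d: "c = Suc d" "d < lam"
    using assms by (cases c) auto
  then have "(lam * i + c - 1) div lam = i" "(lam * i + c - 1) mod lam = d"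
    by (simp_all add: mult.commute)
  then show ?thesis
    using d by (simp add: leaf_def)
qed

lemma chain_index:
  assumes "k > 0"
  obtains i c where "k = lam * i + c" "1 \<le> c" "c \<le> lam"
proof
  show "k = lam * ((k - 1) div lam) + ((k - 1) mod lam + 1)"
    using assms by simp
  show "(k - 1) mod lam + 1 \<le> lam"
    using lam_pos by (simp add: Suc_leI)
qed simp

lemma leafLabels_eq_range: "leafLabels j s lam = range leaf"
proof (intro equalityI subsetI)
  fix x assume "x \<in> leafLabels j s lam"
  then consider "x = s + 2"
    | i c where "x = Lic j s lam i c" "1 \<le> i" "1 \<le> c" "c \<le> lam"
    unfolding leafLabels_def by blast
  then show "x \<in> range leaf"
  proof cases
    case 1
    then show ?thesis by (metis leaf_def rangeI)
  next
    case 2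
    then obtain i' where "i = Suc i'" by (cases i) auto
    then show ?thesis using 2 leaf_chain by (metis rangeI)
  qed
next
  fix x assume "x \<in> range leaf"
  then obtain k where x: "x = leaf k" by blast
  show "x \<in> leafLabels j s lam"
  proof (cases "k = 0")
    case True
    then show ?thesis using x by (simp add: leaf_def leafLabels_def)
  next
    case False
    then obtain i c where "k = lam * i + c" "1 \<le> c" "c \<le> lam"
      using chain_index by blast
    then show ?thesis
      using x leaf_chain unfolding leafLabels_def by fastforce
  qed
qed

text \<open>Fact (1): the \<open>k\<close>-th leaf label exceeds the \<open>(k - lam)\<close>-th one by \<open>s + 1 + j * k\<close>
  (the labels of one supernode, one knot node and \<open>k\<close> chain segments of length \<open>j\<close>).\<close>
lemma leaf_rec:
  assumes "k > 0"
  shows "leaf k = leaf (k - lam) + s + 1 + j * k"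
proof -
  obtain i c where k: "k = lam * i + c" and c: "1 \<le> c" "c \<le> lam"
    using chain_index[OF assms] by blast
  show ?thesis
  proof (cases i)
    case 0
    then show ?thesis
      using k c leaf_chain[OF c, of 0] by (simp add: leaf_def Lic_one)
  next
    case (Suc i')
    have "leaf k = Lic j s lam (Suc (Suc i')) c"
      using k Suc leaf_chain[OF c, of i] by simp
    moreover have "leaf (k - lam) = Lic j s lam (Suc i') c"
      using k Suc leaf_chain[OF c, of i'] by simp
    ultimately show ?thesis
      using k Suc by (simp only: Lic_Suc)
  qed
qed

lemma leaf_0: "leaf 0 = s + 2"
  by (simp add: leaf_def)

text \<open>The label of the last chain bottom below \<open>N\<^sub>1\<close>, the threshold of the theorem.\<close>
lemma leaf_lam: "leaf lam = 2 * s + 3 + lam * j"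
  using leaf_rec[of lam] leaf_0 lam_pos by simp

lemma leaf_gap: "leaf k + j \<le> leaf (Suc k)"
proof (induction k rule: less_induct)
  case (less k)
  show ?case
  proof (cases "k = 0")
    case True
    have "leaf (Suc 0) = leaf 0 + s + 1 + j"
      using leaf_rec[of 1] lam_pos by simp
    then show ?thesis using True by simp
  next
    case False
    have "leaf (k - lam) \<le> leaf (Suc k - lam)"
    proof (cases "lam \<le> k")
      case True
      then have "Suc k - lam = Suc (k - lam)" "k - lam < k"
        using lam_pos False by auto
      then show ?thesis using less.IH[of "k - lam"] by simp
    qed simp
    moreover have "leaf (Suc k) = leaf (Suc k - lam) + s + 1 + j * k + j"
      using leaf_rec[of "Suc k"] by simp
    ultimately show ?thesis
      using leaf_rec[of k] False by simp
  qed
qed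

lemma leaf_strict_mono: "strict_mono leaf"
proof (unfold strict_mono_Suc_iff, intro allI)
  fix k
  show "leaf k < leaf (Suc k)"
    using leaf_gap[of k] j_pos by linarith
qed

lemma leaf_ge: "s + 2 \<le> leaf k"
  using leaf_strict_mono leaf_0 by (metis le0 strict_mono_less_eq)

lemma leaf_le_iff: "leaf k \<le> N \<longleftrightarrow> k < cnt N"
  unfolding cnt_def by (rule le_iff_less_card_strict_mono[OF leaf_strict_mono])

lemma leafWeight_cnt: "leafWeight j s lam N = 1 + j * cnt N"
proof -
  have "{l \<in> leafLabels j s lam. l \<le> N} = leaf ` {k. leaf k \<le> N}"
    unfolding leafLabels_eq_range by blast
  moreover have "inj leaf"
    using leaf_strict_mono strict_mono_imp_inj_on by blast
  ultimately show ?thesis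
    unfolding leafWeight_def cnt_def by (simp add: card_image inj_on_subset)
qed

lemma shifted_window:
  assumes "leaf lam \<le> n"
  defines "K \<equiv> cnt n" and "D \<equiv> s + 1 + j * cnt (n - j)"
  shows "lam < K" and "leaf (K - 1 - lam) + D \<le> n" and "n < leaf (K - lam) + D"
proof -
  show K_big: "lam < K" using assms leaf_le_iff by blast
  have below: "leaf (K - 1) \<le> n" and above: "n < leaf K"
    using leaf_le_iff[of "K - 1" n] leaf_le_iff[of K n] K_big unfolding K_def by auto
  have rec_prev: "leaf (K - 1) = leaf (K - 1 - lam) + s + 1 + j * (K - 1)"
    and rec_K: "leaf K = leaf (K - lam) + s + 1 + j * K"
    using leaf_rec[of "K - 1"] leaf_rec[of K] K_big lam_pos by auto
  have gap: "leaf (K - 1 - lam) + j \<le> leaf (K - lam)"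
    using leaf_gap[of "K - 1 - lam"] K_big by (simp add: Suc_diff_Suc)
  have jK: "j * (K - 1) + j = j * K"
    using K_big by (cases K) auto
  consider "leaf (K - 1) \<le> n - j" | "n - j < leaf (K - 1)" by linarith
  then have "leaf (K - 1 - lam) + D \<le> n \<and> n < leaf (K - lam) + D"
  proof cases
    case 1
    have "\<not> K < cnt (n - j)" using above leaf_le_iff[of K "n - j"] by auto
    moreover have "K - 1 < cnt (n - j)" using 1 leaf_le_iff by blast
    ultimately have "cnt (n - j) = K" by linarith
    then have "D = s + 1 + j * K" by (simp add: D_def)
    then show ?thesis
      using 1 above rec_prev rec_K jK by linarith
  next
    case 2
    have "leaf (K - 1 - 1) + j \<le> leaf (K - 1)"
      using leaf_gap[of "K - 1 - 1"] K_big lam_pos by (simp add: Suc_diff_Suc)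
    then have "leaf (K - 1 - 1) \<le> n - j"
      using below by linarith
    then have "K - 1 - 1 < cnt (n - j)"
      using leaf_le_iff by blast
    moreover have "\<not> K - 1 < cnt (n - j)" using 2 leaf_le_iff[of "K - 1" "n - j"] by simp
    ultimately have "cnt (n - j) = K - 1" by linarith
    then have "D = s + 1 + j * (K - 1)" by (simp add: D_def)
    then show ?thesis
      using 2 below gap rec_prev jK by linarith
  qed
  then show "leaf (K - 1 - lam) + D \<le> n" and "n < leaf (K - lam) + D"
    by auto
qed

end

theorem mainTheorem1:
  fixes j lam s n :: nat
  assumes "j \<ge> 1" and "lam \<ge> 1" and "n > 3 + 2 * s + lam * j"
  shows "1 \<le> int n - int s - int (leafWeight j s lam (n - j))
       \<and> int n - int s - int (leafWeight j s lam (n - j)) < int n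
       \<and> leafWeight j s lam n
           = leafWeight j s lam (nat (int n - int s - int (leafWeight j s lam (n - j)))) + lam * j"
proof -
  define K where "K = cnt j s lam n"
  define D where "D = s + 1 + j * cnt j s lam (n - j)"
  define m where "m = n - D"
  note count = leaf_le_iff[OF assms(1,2), of s] and weight = leafWeight_cnt[OF assms(1,2), of s]
  have "leaf j s lam lam \<le> n"
    using assms(3) leaf_lam[OF assms(1,2)] by simp
  from shifted_window[OF assms(1,2) this] have
    K_big: "lam < K" and lower: "leaf j s lam (K - 1 - lam) + D \<le> n"
    and upper: "n < leaf j s lam (K - lam) + D"
    unfolding K_def D_def by auto
  have m_int: "int n - int s - int (leafWeight j s lam (n - j)) = int m"
    using lower by (simp add: m_def D_def weight)
  have "K - 1 - lam < cnt j s lam m" and "\<not> K - lam < cnt j s lam m"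
    using lower upper count[of "K - 1 - lam" m] count[of "K - lam" m] unfolding m_def by auto
  then have "cnt j s lam m = K - lam"
    using K_big by linarith
  moreover have "1 \<le> m" "m < n"
    using lower leaf_ge[OF assms(1,2), of s "K - 1 - lam"] by (auto simp: m_def D_def)
  ultimately show ?thesis
    using K_big m_int by (simp add: weight K_def algebra_simps)
qed

end
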